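(* Let $X\subset\mathbb{R}^N$ be compact, $f$ a smooth vector field on $X$ with flow $\phi_t$, $B\subset X$ measurable and $\tau>0$. The finite time controllability gramian $\mathcal{C}_B^{\tau}:L^2(X)\to L^2(X)$, $$\mathcal{C}_B^{\tau}z=\int_0^{\tau}\mathbb{P}_{\tau-s}\big(\chi_B\,\mathbb{U}_{\tau-s}z\big)\,ds,$$ is a multiplication operator: for all $z\in L^2(X)$, $$(\mathcal{C}_B^{\tau}z)(x)=\left(\int_0^{\tau}(\mathbb{P}_t\chi_B)(x)\,dt\right)z(x).$$
   Context: $(\mathbb{P}_t\rho)(x)=\rho(\phi_{-t}(x))\left|\det\frac{\partial\phi_t(x)}{\partial x}\right|^{-1}$ is the Perron–Frobenius semigroup and $(\mathbb{U}_t\rho)(x)=\rho(\phi_t(x))$ the Koopman semigroup on $L^2(X)$ (with generators $-\nabla\cdot(f\rho)$, domain $\{\rho\in H^1(X):\rho|_{\Gamma_i}=0\}$, and $f\cdot\nabla\rho$, domain $\{\rho\in H^1(X):\rho|_{\Gamma_o}=0\}$, where $\Gamma_i,\Gamma_o$ are the parts of $\partial X$ where $f\cdot\eta<0$, resp. $>0$, $\eta$ the outward normal). $\chi_B$ is the indicator of $B$. The gramian equals $\mathcal{B}^{\tau}\mathcal{B}^{\tau*}$ for the controllability operator $\mathcal{B}^\tau u=\int_0^\tau\mathbb{P}_{\tau-s}(\chi_B u(\cdot,s))ds$ of the system $\partial_t\rho+\nabla\cdot(f\rho)=\chi_B u$, $\rho|_{\Gamma_i}=0$. *)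

theory Defs
  imports "HOL-Analysis.Analysis"
begin

fun Ck :: "nat \<Rightarrow> ('a::euclidean_space \<Rightarrow> 'b::real_normed_vector) \<Rightarrow> bool" where
  "Ck 0 g = continuous_on UNIV g"
| "Ck (Suc k) g = (g differentiable_on UNIV \<and>
      (\<forall>v. Ck k (\<lambda>x. frechet_derivative g (at x) v)))"

definition smooth :: "('a::euclidean_space \<Rightarrow> 'b::real_normed_vector) \<Rightarrow> bool" where
  "smooth g \<longleftrightarrow> (\<forall>k. Ck k g)"

definition is_flow :: "('a::euclidean_space \<Rightarrow> 'a) \<Rightarrow> (real \<Rightarrow> 'a \<Rightarrow> 'a) \<Rightarrow> bool" where
  "is_flow f \<phi> \<longleftrightarrow> (\<forall>x. \<phi> 0 x = x) \<and> (\<forall>s t x. \<phi> (s + t) x = \<phi> s (\<phi> t x)) \<and>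
     (\<forall>x t. ((\<lambda>s. \<phi> s x) has_vector_derivative f (\<phi> t x)) (at t))"

text \<open>Functions in L^2(X) are extended by zero outside X.\<close>
definition ext0 :: "'a set \<Rightarrow> ('a \<Rightarrow> real) \<Rightarrow> 'a \<Rightarrow> real" where
  "ext0 X \<rho> y = (if y \<in> X then \<rho> y else 0)"

definition L2 :: "(real^'n) set \<Rightarrow> (real^'n \<Rightarrow> real) set" where
  "L2 X = {z. z \<in> borel_measurable (lebesgue_on X) \<and> integrable (lebesgue_on X) (\<lambda>x. (z x)^2)}"

definition jacdet :: "(real^'n \<Rightarrow> real^'n) \<Rightarrow> real^'n \<Rightarrow> real" where
  "jacdet g y = det (matrix (frechet_derivative g (at y)))"

definition PF :: "(real \<Rightarrow> real^'n \<Rightarrow> real^'n) \<Rightarrow> (real^'n) set \<Rightarrow> real \<Rightarrow> (real^'n \<Rightarrow> real) \<Rightarrow> real^'n \<Rightarrow> real" where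
  "PF \<phi> X t \<rho> x = ext0 X \<rho> (\<phi> (-t) x) / \<bar>jacdet (\<phi> t) (\<phi> (-t) x)\<bar>"

definition Koop :: "(real \<Rightarrow> real^'n \<Rightarrow> real^'n) \<Rightarrow> (real^'n) set \<Rightarrow> real \<Rightarrow> (real^'n \<Rightarrow> real) \<Rightarrow> real^'n \<Rightarrow> real" where
  "Koop \<phi> X t \<rho> x = ext0 X \<rho> (\<phi> t x)"

definition gramian :: "(real \<Rightarrow> real^'n \<Rightarrow> real^'n) \<Rightarrow> (real^'n) set \<Rightarrow> (real^'n) set \<Rightarrow> real \<Rightarrow> (real^'n \<Rightarrow> real) \<Rightarrow> real^'n \<Rightarrow> real" where
  "gramian \<phi> X B \<tau> z x =
     integral\<^sup>L (lebesgue_on {0..\<tau>}) (\<lambda>s. PF \<phi> X (\<tau> - s) (\<lambda>y. indicator B y * Koop \<phi> X (\<tau> - s) z y) x)"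

end

theory Submission
  imports Defs
begin

text \<open>Along the flow, the Koopman operator undoes the backward transport in the
  Perron--Frobenius operator: \<open>(\<P>\<^sub>t(\<rho> \<cdot> \<U>\<^sub>t z))(x) = (\<P>\<^sub>t \<rho>)(x) z(\<phi>\<^sub>t(\<phi>\<^sub>-\<^sub>t x)) = (\<P>\<^sub>t \<rho>)(x) z(x)\<close>.
  Hence every integrand of the gramian is \<open>(\<P>\<^sub>\<tau>\<^sub>-\<^sub>s \<chi>\<^sub>B)(x) z(x)\<close>, and the
  substitution \<open>t = \<tau> - s\<close> turns the gramian into multiplication by
  \<open>\<integral>\<^sub>0\<^sup>\<tau> (\<P>\<^sub>t \<chi>\<^sub>B)(x) dt\<close>.\<close>

lemma has_bochner_integral_reflect_interval:
  fixes g :: "real \<Rightarrow> 'a::euclidean_space"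
  shows "has_bochner_integral (lebesgue_on {a..b}) (\<lambda>s. g (a + b - s)) i \<longleftrightarrow>
         has_bochner_integral (lebesgue_on {a..b}) g i"
proof -
  have reflect: "(\<lambda>s. indicator {a..b} (a + b + (-1) * s) *\<^sub>R g (a + b + (-1) * s)) =
                 (\<lambda>s. indicator {a..b} s *\<^sub>R g (a + b - s))"
    by (auto simp: indicator_def fun_eq_iff)
  have "has_bochner_integral (lebesgue_on {a..b}) g i \<longleftrightarrow>
        has_bochner_integral lebesgue (\<lambda>s. indicator {a..b} s *\<^sub>R g s) i"
    by (simp add: has_bochner_integral_restrict_space)
  also have "\<dots> \<longleftrightarrow> has_bochner_integral lebesgue (\<lambda>s. indicator {a..b} s *\<^sub>R g (a + b - s)) i"
    using has_bochner_integral_lebesgue_real_affine_iff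
            [of "-1" "\<lambda>s. indicator {a..b} s *\<^sub>R g s" i "a + b"]
    by (simp only: reflect) simp
  also have "\<dots> \<longleftrightarrow> has_bochner_integral (lebesgue_on {a..b}) (\<lambda>s. g (a + b - s)) i"
    by (simp add: has_bochner_integral_restrict_space)
  finally show ?thesis by simp
qed

lemma integral_reflect_interval:
  fixes g :: "real \<Rightarrow> 'a::euclidean_space"
  shows "integral\<^sup>L (lebesgue_on {a..b}) (\<lambda>s. g (a + b - s)) = integral\<^sup>L (lebesgue_on {a..b}) g"
  by (metis has_bochner_integral_iff has_bochner_integral_reflect_interval
      not_integrable_integral_eq)

lemma is_flow_inverse:
  assumes "is_flow f \<phi>"
  shows "\<phi> t (\<phi> (-t) x) = x"
  using assms unfolding is_flow_def by (metis add.right_inverse)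

lemma PF_mult_Koop:
  assumes "is_flow f \<phi>" and "x \<in> X"
  shows "PF \<phi> X t (\<lambda>y. \<rho> y * Koop \<phi> X t z y) x = PF \<phi> X t \<rho> x * z x"
  using assms is_flow_inverse[OF assms(1), of t x]
  by (simp add: PF_def Koop_def ext0_def)

theorem theorem2:
  fixes X B :: "(real^'n) set" and f :: "real^'n \<Rightarrow> real^'n"
    and \<phi> :: "real \<Rightarrow> real^'n \<Rightarrow> real^'n" and \<tau> :: real and z :: "real^'n \<Rightarrow> real"
  assumes "compact X"
    and "smooth f"
    and "is_flow f \<phi>"
    and "B \<in> sets lebesgue" and "B \<subseteq> X"
    and "\<tau> > 0"
    and "z \<in> L2 X"
  shows "\<forall>x\<in>X. gramian \<phi> X B \<tau> z x =
           integral\<^sup>L (lebesgue_on {0..\<tau>}) (\<lambda>t. PF \<phi> X t (indicator B) x) * z x"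
proof
  fix x assume "x \<in> X"
  let ?integrand = "\<lambda>t. PF \<phi> X t (indicator B) x * z x"
  have "gramian \<phi> X B \<tau> z x = integral\<^sup>L (lebesgue_on {0..\<tau>}) (\<lambda>s. ?integrand (0 + \<tau> - s))"
    unfolding gramian_def using PF_mult_Koop[OF \<open>is_flow f \<phi>\<close> \<open>x \<in> X\<close>] by simp
  also have "\<dots> = integral\<^sup>L (lebesgue_on {0..\<tau>}) ?integrand"
    by (rule integral_reflect_interval)
  also have "\<dots> = integral\<^sup>L (lebesgue_on {0..\<tau>}) (\<lambda>t. PF \<phi> X t (indicator B) x) * z x"
    by simp
  finally show "gramian \<phi> X B \<tau> z x = integral\<^sup>L (lebesgue_on {0..\<tau>}) (\<lambda>t. PF \<phi> X t (indicator B) x) * z x" .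
qed

end
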